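(* Let $S$ be the three-vertex tree with root $a$, whose right child is $b$, where $b$ has a left child $c$ (preorder $132$), and let $S'$ be the three-vertex tree with a root having both a left child and a right child (preorder $213$); all edges of $S$ and $S'$ are contiguous. Let $(P,e)$ be any tree pattern. Let $Q$ be obtained from $S$ by attaching $(P,e)$ as the right subtree of the leaf $c$ via a non-contiguous edge, and let $Q'$ be obtained from $S'$ by attaching $(P,e)$ as the left subtree of the left leaf of $S'$ via a non-contiguous edge. Then $Q$ and $Q'$ are Wilf-equivalent.
   Context: $\mathcal{T}_n$ is the set of binary trees on $n$ vertices labeled $1,\dots,n$ by the search tree property (labels of combined trees reassigned by this property). $c_L,c_R,p$: left child, right child, parent. A tree pattern is $(P,e)$, $P\in\mathcal{T}_k$, $e\colon[k]\setminus\{\text{root}\}\to\{0,1\}$; edge $(i,p(i))$ is contiguous if $e(i)=1$, non-contiguous if $e(i)=0$. $T\in\mathcal{T}_n$ contains $(P,e)$ if there is an injection $f\colon[k]\to[n]$ such that for every non-root $i$ of $P$: if $e(i)=1$, $f(i)$ is the left (resp. right) child of $f(p(i))$ when $i$ is the left (resp. right) child of $p(i)$; if $e(i)=0$, $f(i)$ lies in the left (resp. right) subtree of $f(p(i))$. $\mathcal{T}_n(Q)$ is the set of avoiders of $Q$. $Q,Q'$ are Wilf-equivalent if $|\mathcal{T}_n(Q)|=|\mathcal{T}_n(Q')|$ for all $n\ge0$. *)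

theory Defs
  imports Main
begin

text \<open>Binary trees on n vertices.  A tree in T_n is determined by its shape, since the
labels 1..n are forced by the search tree property; so we use unlabeled shapes.\<close>
datatype btree = Leaf | Node btree btree

fun nnodes :: "btree \<Rightarrow> nat" where
  "nnodes Leaf = 0"
| "nnodes (Node l r) = Suc (nnodes l + nnodes r)"

text \<open>Vertices are addressed by paths from the root: False = go to left child,
True = go to right child.\<close>
fun nodes :: "btree \<Rightarrow> bool list set" where
  "nodes Leaf = {}"
| "nodes (Node l r) = {[]} \<union> Cons False ` nodes l \<union> Cons True ` nodes r"

text \<open>A tree pattern (P,e): P a nonempty tree, e assigns to each non-root vertex
(a path p @ [d]) whether the edge to its parent is contiguous (True) or not (False).
Values of e at non-vertices or at the root are irrelevant.\<close>
definition contains :: "btree \<Rightarrow> btree \<Rightarrow> (bool list \<Rightarrow> bool) \<Rightarrow> bool" where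
  "contains T P e \<longleftrightarrow> (\<exists>f. inj_on f (nodes P) \<and> f ` nodes P \<subseteq> nodes T \<and>
     (\<forall>p d. p @ [d] \<in> nodes P \<longrightarrow>
        (if e (p @ [d]) then f (p @ [d]) = f p @ [d]
         else (\<exists>r. f (p @ [d]) = f p @ d # r))))"

definition avoiders :: "nat \<Rightarrow> btree \<Rightarrow> (bool list \<Rightarrow> bool) \<Rightarrow> btree set" where
  "avoiders n P e = {T. nnodes T = n \<and> \<not> contains T P e}"

definition wilf_equiv ::
  "btree \<Rightarrow> (bool list \<Rightarrow> bool) \<Rightarrow> btree \<Rightarrow> (bool list \<Rightarrow> bool) \<Rightarrow> bool" where
  "wilf_equiv P e P' e' \<longleftrightarrow> (\<forall>n. card (avoiders n P e) = card (avoiders n P' e'))"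

text \<open>Edge labelling of a pattern obtained by attaching (P,e) at path pre via a
non-contiguous edge, all other edges contiguous.\<close>
definition attach_e :: "bool list \<Rightarrow> (bool list \<Rightarrow> bool) \<Rightarrow> bool list \<Rightarrow> bool" where
  "attach_e pre e x = (if (\<exists>q. x = pre @ q)
      then (if x = pre then False else e (drop (length pre) x)) else True)"

definition Q_tree :: "btree \<Rightarrow> btree" where
  "Q_tree P = Node Leaf (Node (Node Leaf P) Leaf)"

definition Q_e :: "(bool list \<Rightarrow> bool) \<Rightarrow> bool list \<Rightarrow> bool" where
  "Q_e e = attach_e [True, False, True] e"

definition Q'_tree :: "btree \<Rightarrow> btree" where
  "Q'_tree P = Node (Node P Leaf) (Node Leaf Leaf)"

definition Q'_e :: "(bool list \<Rightarrow> bool) \<Rightarrow> bool list \<Rightarrow> bool" where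
  "Q'_e e = attach_e [False, False] e"

end

theory Submission
  imports Defs "HOL-Computational_Algebra.Formal_Power_Series"
begin

text \<open>
  A tree contains Q iff some vertex is the left child of a right child and its right subtree
  contains (P,e); it contains Q' iff some vertex has two children and the left subtree of its
  left child contains (P,e). Decomposing avoiders at the root, and writing A for the generating
  function of the avoiders of (P,e), both the generating function of the Q-avoiders and that of
  the Q'-avoiders satisfy \<open>x\<^sup>2 A Y\<^sup>2 + (1 - x) = (1 - 2x + x\<^sup>2 A) Y\<close>. This quadratic
  has just one power series solution.
\<close>

fun subtree :: "btree \<Rightarrow> bool list \<Rightarrow> btree" where
  "subtree T [] = T"
| "subtree Leaf (d # p) = Leaf"
| "subtree (Node l r) (d # p) = subtree (if d then r else l) p"

lemma Nil_in_nodes_iff [simp]: "[] \<in> nodes T \<longleftrightarrow> T \<noteq> Leaf"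
  by (cases T) auto

lemma Cons_in_nodes_Node_iff [simp]:
  "d # p \<in> nodes (Node l r) \<longleftrightarrow> p \<in> nodes (if d then r else l)"
  by auto

declare nodes.simps(2) [simp del]

lemma append_in_nodes_iff: "c @ p \<in> nodes T \<longleftrightarrow> p \<in> nodes (subtree T c)"
proof (induction c arbitrary: T)
  case (Cons d c)
  then show ?case by (cases T) auto
qed simp

lemma append_in_nodesD: "p @ q \<in> nodes T \<Longrightarrow> p \<in> nodes T"
  using append_in_nodes_iff[of p q T] append_in_nodes_iff[of p "[]" T] by fastforce

definition pattern_embedding ::
  "btree \<Rightarrow> btree \<Rightarrow> (bool list \<Rightarrow> bool) \<Rightarrow> (bool list \<Rightarrow> bool list) \<Rightarrow> bool" where
  "pattern_embedding T P e f \<longleftrightarrow> inj_on f (nodes P) \<and> f ` nodes P \<subseteq> nodes T \<and>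
     (\<forall>p d. p @ [d] \<in> nodes P \<longrightarrow>
        (if e (p @ [d]) then f (p @ [d]) = f p @ [d] else (\<exists>r. f (p @ [d]) = f p @ d # r)))"

lemma contains_iff_pattern_embedding: "contains T P e \<longleftrightarrow> (\<exists>f. pattern_embedding T P e f)"
  by (simp only: contains_def pattern_embedding_def)

lemma pattern_embedding_from_subtree:
  assumes "pattern_embedding (subtree T c) P e g"
  shows "pattern_embedding T P e (\<lambda>q. c @ g q)"
  using assms unfolding pattern_embedding_def inj_on_def by (auto simp: append_in_nodes_iff)

lemma pattern_embedding_into_subtree:
  assumes f: "pattern_embedding T P e f"
    and below_c: "\<And>q. q \<in> nodes P \<Longrightarrow> \<exists>r. f q = c @ r"
  shows "pattern_embedding (subtree T c) P e (\<lambda>q. drop (length c) (f q))"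
proof -
  define g where "g q = drop (length c) (f q)" for q
  have f_eq: "f q = c @ g q" if "q \<in> nodes P" for q
    using below_c[OF that] by (auto simp: g_def)
  have "inj_on g (nodes P)"
    using f f_eq unfolding pattern_embedding_def inj_on_def by (metis same_append_eq)
  moreover have "g ` nodes P \<subseteq> nodes (subtree T c)"
    using f f_eq unfolding pattern_embedding_def by (auto simp flip: append_in_nodes_iff)
  moreover have "if e (p @ [d]) then g (p @ [d]) = g p @ [d] else (\<exists>r. g (p @ [d]) = g p @ d # r)"
    if "p @ [d] \<in> nodes P" for p d
  proof -
    have "if e (p @ [d]) then f (p @ [d]) = f p @ [d] else (\<exists>r. f (p @ [d]) = f p @ d # r)"
      using f that unfolding pattern_embedding_def by blast
    then show ?thesis using f_eq[OF that] f_eq[OF append_in_nodesD[OF that]] by auto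
  qed
  ultimately show ?thesis unfolding pattern_embedding_def g_def by blast
qed

lemma pattern_embedding_subpattern:
  assumes f: "pattern_embedding T Q e' f"
    and P_below: "\<And>q. q \<in> nodes P \<Longrightarrow> pre @ q \<in> nodes Q"
    and e_below: "\<And>q. q \<noteq> [] \<Longrightarrow> e' (pre @ q) = e q"
  shows "pattern_embedding T P e (\<lambda>q. f (pre @ q))"
proof -
  have "inj_on (\<lambda>q. f (pre @ q)) (nodes P)"
    using f P_below unfolding pattern_embedding_def inj_on_def by blast
  moreover have "(\<lambda>q. f (pre @ q)) ` nodes P \<subseteq> nodes T"
    using f P_below unfolding pattern_embedding_def by blast
  moreover have "if e (p @ [d]) then f (pre @ p @ [d]) = f (pre @ p) @ [d]
      else (\<exists>r. f (pre @ p @ [d]) = f (pre @ p) @ d # r)"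
    if "p @ [d] \<in> nodes P" for p d
    using f P_below[OF that] e_below[of "p @ [d]"] unfolding pattern_embedding_def
    by (metis append.assoc snoc_eq_iff_butlast)
  ultimately show ?thesis unfolding pattern_embedding_def by blast
qed

lemma contains_subtree: "contains (subtree T c) P e \<Longrightarrow> contains T P e"
  using pattern_embedding_from_subtree contains_iff_pattern_embedding by blast

lemma contains_Node: "contains l P e \<or> contains r P e \<Longrightarrow> contains (Node l r) P e"
  using contains_subtree[of "Node l r" "[False]"] contains_subtree[of "Node l r" "[True]"] by auto

text \<open>
  Q consists of the skeleton S, all of whose edges are contiguous, and a copy of P hanging from
  the vertex \<open>butlast pre\<close> of S via a non-contiguous edge to \<open>pre\<close>.
\<close>

locale attached_pattern =
  fixes Q :: btree and S :: "bool list set" and pre :: "bool list" and P :: btree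
  assumes nodes_Q: "nodes Q = S \<union> (\<lambda>q. pre @ q) ` nodes P"
    and S_prefix_closed: "p @ [d] \<in> S \<Longrightarrow> p \<in> S"
    and pre_nonempty: "pre \<noteq> []"
    and butlast_pre_in_S: "butlast pre \<in> S"
    and below_pre_notin_S: "pre @ q \<notin> S"
begin

lemma attach_e_on_S: "s \<in> S \<Longrightarrow> attach_e pre e s"
  using below_pre_notin_S[of "[]"] below_pre_notin_S unfolding attach_e_def by auto

lemma attach_e_below_pre: "attach_e pre e (pre @ q) \<longleftrightarrow> q \<noteq> [] \<and> e q"
  unfolding attach_e_def by simp

lemma pattern_embedding_on_S:
  assumes f: "pattern_embedding T Q (attach_e pre e) f" and "s \<in> S"
  shows "f s = f [] @ s"
  using \<open>s \<in> S\<close>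
proof (induction s rule: rev_induct)
  case (snoc d p)
  then have "p \<in> S" "p @ [d] \<in> nodes Q" using S_prefix_closed nodes_Q by auto
  then show ?case
    using f snoc attach_e_on_S[OF snoc.prems] unfolding pattern_embedding_def by auto
qed simp

lemma pattern_embedding_below_pre:
  assumes f: "pattern_embedding T Q (attach_e pre e) f" and "q \<in> nodes P"
  shows "\<exists>r. f (pre @ q) = f [] @ pre @ r"
  using \<open>q \<in> nodes P\<close>
proof (induction q rule: rev_induct)
  case Nil
  have pre_split: "pre = butlast pre @ [last pre]"
    using pre_nonempty by simp
  moreover have "pre \<in> nodes Q" using Nil nodes_Q by auto
  ultimately obtain r where "f pre = f (butlast pre) @ last pre # r"
    using f attach_e_below_pre[of e "[]"] unfolding pattern_embedding_def by (metis append_Nil2)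
  then show ?case
    using pattern_embedding_on_S[OF f butlast_pre_in_S] pre_split
    by (metis append.assoc append_Cons append_Nil append_Nil2)
next
  case (snoc d q)
  then obtain r where r: "f (pre @ q) = f [] @ pre @ r"
    using append_in_nodesD by blast
  have "(pre @ q) @ [d] \<in> nodes Q" using snoc.prems nodes_Q by auto
  then obtain r' where "f ((pre @ q) @ [d]) = f (pre @ q) @ d # r'"
    using f unfolding pattern_embedding_def by (metis append_Cons append_Nil)
  then show ?case using r by auto
qed

lemma contains_attached_imp:
  assumes "contains T Q (attach_e pre e)"
  shows "\<exists>a. (\<forall>s\<in>S. a @ s \<in> nodes T) \<and> contains (subtree T (a @ pre)) P e"
proof -
  obtain f where f: "pattern_embedding T Q (attach_e pre e) f"
    using assms contains_iff_pattern_embedding by blast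
  have S_in_T: "\<forall>s\<in>S. f [] @ s \<in> nodes T"
    using f pattern_embedding_on_S[OF f] nodes_Q unfolding pattern_embedding_def
    by (metis UnI1 image_subset_iff)
  have "pattern_embedding T P e (\<lambda>q. f (pre @ q))"
    by (rule pattern_embedding_subpattern[OF f]) (auto simp: nodes_Q attach_e_below_pre)
  then have "pattern_embedding (subtree T (f [] @ pre)) P e
      (\<lambda>q. drop (length (f [] @ pre)) (f (pre @ q)))"
    by (rule pattern_embedding_into_subtree) (use pattern_embedding_below_pre[OF f] in auto)
  then show ?thesis
    using S_in_T contains_iff_pattern_embedding by blast
qed

lemma contains_attached_if:
  assumes S_in_T: "\<forall>s\<in>S. a @ s \<in> nodes T" and "contains (subtree T (a @ pre)) P e"
  shows "contains T Q (attach_e pre e)"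
proof -
  obtain g where "pattern_embedding (subtree T (a @ pre)) P e g"
    using assms contains_iff_pattern_embedding by blast
  then have g: "pattern_embedding T P e (\<lambda>q. (a @ pre) @ g q)"
    by (rule pattern_embedding_from_subtree)
  define f where "f x = (if x \<in> S then a @ x else a @ pre @ g (drop (length pre) x))" for x
  have f_S: "f s = a @ s" if "s \<in> S" for s
    using that by (simp add: f_def)
  have f_below_pre: "f (pre @ q) = a @ pre @ g q" for q
    using below_pre_notin_S by (simp add: f_def)
  have "inj_on f (nodes Q)"
  proof (rule inj_onI)
    fix x y assume x: "x \<in> nodes Q" and y: "y \<in> nodes Q" and "f x = f y"
    have "inj_on g (nodes P)"
      using g unfolding pattern_embedding_def inj_on_def by simp
    then show "x = y"
      using x y \<open>f x = f y\<close> unfolding nodes_Q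
      using below_pre_notin_S by (auto simp: f_S f_below_pre inj_on_eq_iff)
  qed
  moreover have "f ` nodes Q \<subseteq> nodes T"
    using g S_in_T unfolding nodes_Q pattern_embedding_def by (auto simp: f_S f_below_pre)
  moreover have "if attach_e pre e (p @ [d]) then f (p @ [d]) = f p @ [d]
      else (\<exists>r. f (p @ [d]) = f p @ d # r)" if pd: "p @ [d] \<in> nodes Q" for p d
  proof (cases "p @ [d] \<in> S")
    case True
    then show ?thesis using S_prefix_closed attach_e_on_S by (simp add: f_S)
  next
    case False
    then obtain q where q: "p @ [d] = pre @ q" "q \<in> nodes P" using pd nodes_Q by auto
    show ?thesis
    proof (cases q rule: rev_exhaust)
      case Nil
      then have pre: "pre = p @ [d]" using q by simp
      then have "p \<in> S" using butlast_pre_in_S by simp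
      have "\<not> attach_e pre e (p @ [d])" using attach_e_below_pre[of e "[]"] pre by simp
      moreover have "f (p @ [d]) = f p @ d # g []"
        using f_below_pre[of "[]"] f_S[OF \<open>p \<in> S\<close>] pre by simp
      ultimately show ?thesis by auto
    next
      case (snoc q' d')
      then have p: "p = pre @ q'" and "q = q' @ [d]" using q by auto
      then have "if e (q' @ [d]) then (a @ pre) @ g (q' @ [d]) = ((a @ pre) @ g q') @ [d]
          else (\<exists>r. (a @ pre) @ g (q' @ [d]) = ((a @ pre) @ g q') @ d # r)"
        using g q unfolding pattern_embedding_def by blast
      then show ?thesis by (auto simp: p f_below_pre attach_e_below_pre split: if_splits)
    qed
  qed
  ultimately show ?thesis
    unfolding contains_iff_pattern_embedding pattern_embedding_def by blast
qed

lemma contains_attached_iff: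
  "contains T Q (attach_e pre e) \<longleftrightarrow>
    (\<exists>a. (\<forall>s\<in>S. a @ s \<in> nodes T) \<and> contains (subtree T (a @ pre)) P e)"
  using contains_attached_imp contains_attached_if by blast

end

fun occurs_Q :: "(btree \<Rightarrow> bool) \<Rightarrow> btree \<Rightarrow> bool" where
  "occurs_Q C Leaf \<longleftrightarrow> False"
| "occurs_Q C (Node l r) \<longleftrightarrow>
    occurs_Q C l \<or> occurs_Q C r \<or> (\<exists>x y z. r = Node (Node x y) z \<and> C y)"

fun occurs_Q' :: "(btree \<Rightarrow> bool) \<Rightarrow> btree \<Rightarrow> bool" where
  "occurs_Q' C Leaf \<longleftrightarrow> False"
| "occurs_Q' C (Node l r) \<longleftrightarrow>
    occurs_Q' C l \<or> occurs_Q' C r \<or> (\<exists>x y. l = Node x y \<and> r \<noteq> Leaf \<and> C x)"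

lemma ex_list_bool_cases:
  "(\<exists>a::bool list. \<Phi> a) \<longleftrightarrow> \<Phi> [] \<or> (\<exists>a. \<Phi> (False # a)) \<or> (\<exists>a. \<Phi> (True # a))"
  by (metis (full_types) list.exhaust)

lemma occurs_Q_iff:
  "occurs_Q C T \<longleftrightarrow> (\<exists>a. a @ [True, False] \<in> nodes T \<and> C (subtree T (a @ [True, False, True])))"
proof (induction T)
  case (Node l r)
  have "(\<exists>x y z. r = Node (Node x y) z \<and> C y) \<longleftrightarrow>
      [True, False] \<in> nodes (Node l r) \<and> C (subtree (Node l r) [True, False, True])"
  proof (cases r)
    case (Node r1 r2)
    then show ?thesis by (cases r1) auto
  qed simp
  then show ?case
    by (subst ex_list_bool_cases) (auto simp: Node.IH)
qed simp

lemma occurs_Q'_iff: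
  "occurs_Q' C T \<longleftrightarrow>
    (\<exists>a. a @ [False] \<in> nodes T \<and> a @ [True] \<in> nodes T \<and> C (subtree T (a @ [False, False])))"
proof (induction T)
  case (Node l r)
  have "(\<exists>x y. l = Node x y \<and> r \<noteq> Leaf \<and> C x) \<longleftrightarrow>
      [False] \<in> nodes (Node l r) \<and> [True] \<in> nodes (Node l r) \<and>
      C (subtree (Node l r) [False, False])"
    by (cases l) auto
  then show ?case
    by (subst ex_list_bool_cases) (auto simp: Node.IH)
qed simp

lemma occurs_Q_imp:
  assumes C_Node: "\<And>l r. C l \<or> C r \<Longrightarrow> C (Node l r)"
  shows "occurs_Q C T \<Longrightarrow> C T"
proof (induction T)
  case (Node l r)
  have "C r" if "r = Node (Node x y) z" and "C y" for x y z
    using that C_Node by simp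
  then show ?case using Node C_Node by auto
qed simp

lemma occurs_Q'_imp:
  assumes C_Node: "\<And>l r. C l \<or> C r \<Longrightarrow> C (Node l r)"
  shows "occurs_Q' C T \<Longrightarrow> C T"
proof (induction T)
  case (Node l r)
  then show ?case using C_Node by auto
qed simp

lemma contains_Q_tree_iff: "contains T (Q_tree P) (Q_e e) \<longleftrightarrow> occurs_Q (\<lambda>U. contains U P e) T"
proof -
  interpret attached_pattern "Q_tree P" "{[], [True], [True, False]}" "[True, False, True]" P
    by unfold_locales (auto simp: Q_tree_def nodes.simps(2) image_Un image_image)
  have "(\<forall>s\<in>{[], [True], [True, False]}. a @ s \<in> nodes T) \<longleftrightarrow>
      a @ [True, False] \<in> nodes T" for a
    using append_in_nodesD[of a] append_in_nodesD[of "a @ [True]" "[False]"] by auto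
  then show ?thesis
    unfolding Q_e_def contains_attached_iff occurs_Q_iff by simp
qed

lemma contains_Q'_tree_iff: "contains T (Q'_tree P) (Q'_e e) \<longleftrightarrow> occurs_Q' (\<lambda>U. contains U P e) T"
proof -
  interpret attached_pattern "Q'_tree P" "{[], [False], [True]}" "[False, False]" P
    by unfold_locales (auto simp: Q'_tree_def nodes.simps(2) image_Un image_image)
  have "(\<forall>s\<in>{[], [False], [True]}. a @ s \<in> nodes T) \<longleftrightarrow>
      a @ [False] \<in> nodes T \<and> a @ [True] \<in> nodes T" for a
    using append_in_nodesD[of a] by auto
  then show ?thesis
    unfolding Q'_e_def contains_attached_iff occurs_Q'_iff by simp
qed

definition tree_gf :: "(btree \<Rightarrow> bool) \<Rightarrow> int fps" where
  "tree_gf \<Phi> = Abs_fps (\<lambda>n. int (card {T. nnodes T = n \<and> \<Phi> T}))"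

lemma finite_nnodes_le: "finite {T. nnodes T \<le> n}"
proof (induction n)
  case 0
  have "{T. nnodes T \<le> 0} = {Leaf}"
    by (auto elim: nnodes.elims)
  then show ?case by simp
next
  case (Suc n)
  have "{T. nnodes T \<le> Suc n} \<subseteq>
      insert Leaf (case_prod Node ` ({T. nnodes T \<le> n} \<times> {T. nnodes T \<le> n}))"
  proof
    fix T assume "T \<in> {T. nnodes T \<le> Suc n}"
    then show "T \<in> insert Leaf (case_prod Node ` ({T. nnodes T \<le> n} \<times> {T. nnodes T \<le> n}))"
      by (cases T) auto
  qed
  then show ?case
    using Suc.IH finite_subset by blast
qed

lemma finite_trees_of_size: "finite {T. nnodes T = n \<and> \<Phi> T}"
  by (rule finite_subset[OF _ finite_nnodes_le[of n]]) auto

lemma fps_nth_tree_gf: "fps_nth (tree_gf \<Phi>) n = int (card {T. nnodes T = n \<and> \<Phi> T})"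
  by (simp add: tree_gf_def)

lemma tree_gf_Leaf: "tree_gf (\<lambda>T. T = Leaf) = 1"
proof (rule fps_ext)
  fix n
  have "{T. nnodes T = n \<and> T = Leaf} = (if n = 0 then {Leaf} else {})"
    by auto
  then show "fps_nth (tree_gf (\<lambda>T. T = Leaf)) n = fps_nth 1 n"
    by (simp add: fps_nth_tree_gf)
qed

lemma tree_gf_disj:
  assumes "\<And>T. \<Phi> T \<Longrightarrow> \<Psi> T \<Longrightarrow> False"
  shows "tree_gf (\<lambda>T. \<Phi> T \<or> \<Psi> T) = tree_gf \<Phi> + tree_gf \<Psi>"
proof (rule fps_ext)
  fix n
  have "{T. nnodes T = n \<and> (\<Phi> T \<or> \<Psi> T)} = {T. nnodes T = n \<and> \<Phi> T} \<union> {T. nnodes T = n \<and> \<Psi> T}"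
    by auto
  then have "card {T. nnodes T = n \<and> (\<Phi> T \<or> \<Psi> T)} =
      card {T. nnodes T = n \<and> \<Phi> T} + card {T. nnodes T = n \<and> \<Psi> T}"
    by (metis (no_types, lifting) card_Un_disjoint finite_trees_of_size assms disjoint_iff mem_Collect_eq)
  then show "fps_nth (tree_gf (\<lambda>T. \<Phi> T \<or> \<Psi> T)) n = fps_nth (tree_gf \<Phi> + tree_gf \<Psi>) n"
    by (simp add: fps_nth_tree_gf)
qed

lemma tree_gf_Node:
  "tree_gf (\<lambda>T. \<exists>l r. T = Node l r \<and> \<Phi> l \<and> \<Psi> r) = fps_X * tree_gf \<Phi> * tree_gf \<Psi>"
proof (rule fps_ext)
  fix n
  show "fps_nth (tree_gf (\<lambda>T. \<exists>l r. T = Node l r \<and> \<Phi> l \<and> \<Psi> r)) n =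
      fps_nth (fps_X * tree_gf \<Phi> * tree_gf \<Psi>) n"
  proof (cases n)
    case 0
    then have no_trees: "{T. nnodes T = n \<and> (\<exists>l r. T = Node l r \<and> \<Phi> l \<and> \<Psi> r)} = {}"
      by auto
    show ?thesis using 0 unfolding fps_nth_tree_gf no_trees by simp
  next
    case (Suc m)
    define pairs where "pairs i = {l. nnodes l = i \<and> \<Phi> l} \<times> {r. nnodes r = m - i \<and> \<Psi> r}" for i
    have trees_eq: "{T. nnodes T = n \<and> (\<exists>l r. T = Node l r \<and> \<Phi> l \<and> \<Psi> r)} =
        case_prod Node ` (\<Union>i\<in>{0..m}. pairs i)"
      using Suc by (auto simp: pairs_def image_iff)
    have "card (\<Union>i\<in>{0..m}. pairs i) = (\<Sum>i=0..m. card (pairs i))"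
      by (rule card_UN_disjoint) (auto simp: pairs_def finite_trees_of_size)
    then have card_eq: "card {T. nnodes T = n \<and> (\<exists>l r. T = Node l r \<and> \<Phi> l \<and> \<Psi> r)} =
        (\<Sum>i=0..m. card {l. nnodes l = i \<and> \<Phi> l} * card {r. nnodes r = m - i \<and> \<Psi> r})"
      unfolding trees_eq by (simp add: card_image inj_on_def pairs_def card_cartesian_product)
    have "fps_nth (fps_X * tree_gf \<Phi> * tree_gf \<Psi>) n = fps_nth (tree_gf \<Phi> * tree_gf \<Psi>) m"
      using Suc by (simp only: mult.assoc fps_X_mult_nth) simp
    then show ?thesis
      unfolding fps_nth_tree_gf card_eq by (simp add: fps_mult_nth fps_nth_tree_gf)
  qed
qed

lemma tree_gf_Leaf_or_Node:
  "tree_gf (\<lambda>T. T = Leaf \<or> (\<exists>l r. T = Node l r \<and> \<Phi> l \<and> \<Psi> r)) =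
    1 + fps_X * tree_gf \<Phi> * tree_gf \<Psi>"
  by (subst tree_gf_disj) (auto simp: tree_gf_Leaf tree_gf_Node)

lemma tree_gf_non_Leaf:
  assumes "\<Phi> Leaf"
  shows "tree_gf (\<lambda>T. \<Phi> T \<and> T \<noteq> Leaf) = tree_gf \<Phi> - 1"
proof -
  have "tree_gf \<Phi> = tree_gf (\<lambda>T. T = Leaf \<or> (\<Phi> T \<and> T \<noteq> Leaf))"
    using assms by metis
  also have "\<dots> = 1 + tree_gf (\<lambda>T. \<Phi> T \<and> T \<noteq> Leaf)"
    by (subst tree_gf_disj) (auto simp: tree_gf_Leaf)
  finally show ?thesis by simp
qed

lemma fps_quadratic_root_unique:
  fixes a b c F H :: "'a::idom fps"
  assumes "a * F^2 + c = b * F" and "a * H^2 + c = b * H"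
    and "fps_nth a 0 = 0" and "fps_nth b 0 \<noteq> 0"
  shows "F = H"
proof -
  have "(F - H) * (a * (F + H) - b) = 0"
    using assms(1,2) by algebra
  moreover have "a * (F + H) - b \<noteq> 0"
  proof
    assume "a * (F + H) - b = 0"
    then have "fps_nth (a * (F + H) - b) 0 = 0" by simp
    then show False using assms(3,4) by simp
  qed
  ultimately show ?thesis by simp
qed

lemma tree_gf_not_occurs_Q:
  assumes C_Node: "\<And>l r. C l \<or> C r \<Longrightarrow> C (Node l r)"
  defines "F \<equiv> tree_gf (\<lambda>T. \<not> occurs_Q C T)" and "A \<equiv> tree_gf (\<lambda>T. \<not> C T)"
  shows "fps_X^2 * A * F^2 + (1 - fps_X) = (1 - 2 * fps_X + fps_X^2 * A) * F"
proof -
  \<comment> \<open>the possible right subtrees of a Q-avoider, and the possible left subtrees of those\<close>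
  define right_ok where
    "right_ok r \<longleftrightarrow> \<not> occurs_Q C r \<and> \<not> (\<exists>x y z. r = Node (Node x y) z \<and> C y)" for r
  define right_left_ok where
    "right_left_ok l \<longleftrightarrow> l = Leaf \<or> (\<exists>x y. l = Node x y \<and> \<not> occurs_Q C x \<and> \<not> C y)" for l
  have "(\<lambda>T. \<not> occurs_Q C T) =
      (\<lambda>T. T = Leaf \<or> (\<exists>l r. T = Node l r \<and> \<not> occurs_Q C l \<and> right_ok r))"
  proof
    fix T
    show "\<not> occurs_Q C T \<longleftrightarrow> T = Leaf \<or> (\<exists>l r. T = Node l r \<and> \<not> occurs_Q C l \<and> right_ok r)"
      by (cases T) (auto simp: right_ok_def)
  qed
  then have F_eq: "F = 1 + fps_X * F * tree_gf right_ok"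
    unfolding F_def by (subst (1) tree_gf_Leaf_or_Node[symmetric]) simp
  have "right_ok = (\<lambda>T. T = Leaf \<or> (\<exists>l r. T = Node l r \<and> right_left_ok l \<and> right_ok r))"
  proof
    fix T
    show "right_ok T \<longleftrightarrow> T = Leaf \<or> (\<exists>l r. T = Node l r \<and> right_left_ok l \<and> right_ok r)"
    proof (cases T)
      case (Node l r)
      have "\<not> occurs_Q C l \<and> \<not> (\<exists>x y. l = Node x y \<and> C y) \<longleftrightarrow> right_left_ok l"
        using occurs_Q_imp[of C, OF C_Node] C_Node by (cases l) (auto simp: right_left_ok_def)
      then show ?thesis using Node by (auto simp: right_ok_def)
    qed (simp add: right_ok_def)
  qed
  then have right_ok_eq:
      "tree_gf right_ok = 1 + fps_X * tree_gf right_left_ok * tree_gf right_ok"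
    by (subst (1) tree_gf_Leaf_or_Node[symmetric]) simp
  have right_left_ok_eq: "tree_gf right_left_ok = 1 + fps_X * F * A"
    unfolding right_left_ok_def F_def A_def by (rule tree_gf_Leaf_or_Node)
  from F_eq right_ok_eq right_left_ok_eq show ?thesis
    by algebra
qed

lemma tree_gf_not_occurs_Q':
  assumes C_Node: "\<And>l r. C l \<or> C r \<Longrightarrow> C (Node l r)"
  defines "H \<equiv> tree_gf (\<lambda>T. \<not> occurs_Q' C T)" and "A \<equiv> tree_gf (\<lambda>T. \<not> C T)"
  shows "fps_X^2 * A * H^2 + (1 - fps_X) = (1 - 2 * fps_X + fps_X^2 * A) * H"
proof -
  \<comment> \<open>the possible left subtrees of a Q'-avoider with nonempty right subtree\<close>
  define left_ok where
    "left_ok l \<longleftrightarrow> l = Leaf \<or> (\<exists>x y. l = Node x y \<and> \<not> C x \<and> \<not> occurs_Q' C y)" for l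
  have "(\<lambda>T. \<not> occurs_Q' C T) = (\<lambda>T. T = Leaf \<or>
      ((\<exists>l r. T = Node l r \<and> \<not> occurs_Q' C l \<and> r = Leaf) \<or>
       (\<exists>l r. T = Node l r \<and> left_ok l \<and> (\<not> occurs_Q' C r \<and> r \<noteq> Leaf))))"
  proof
    fix T
    show "\<not> occurs_Q' C T \<longleftrightarrow> T = Leaf \<or>
      ((\<exists>l r. T = Node l r \<and> \<not> occurs_Q' C l \<and> r = Leaf) \<or>
       (\<exists>l r. T = Node l r \<and> left_ok l \<and> (\<not> occurs_Q' C r \<and> r \<noteq> Leaf)))"
    proof (cases T)
      case (Node l r)
      have "\<not> occurs_Q' C l \<and> \<not> (\<exists>x y. l = Node x y \<and> C x) \<longleftrightarrow> left_ok l"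
        using occurs_Q'_imp[of C, OF C_Node] C_Node by (cases l) (auto simp: left_ok_def)
      then show ?thesis using Node by auto
    qed simp
  qed
  then have "H = tree_gf (\<lambda>T. T = Leaf \<or>
      ((\<exists>l r. T = Node l r \<and> \<not> occurs_Q' C l \<and> r = Leaf) \<or>
       (\<exists>l r. T = Node l r \<and> left_ok l \<and> (\<not> occurs_Q' C r \<and> r \<noteq> Leaf))))"
    unfolding H_def by (rule arg_cong)
  also have "\<dots> = 1 + (fps_X * H * 1 + fps_X * tree_gf left_ok * (H - 1))"
  proof -
    have "tree_gf (\<lambda>r. \<not> occurs_Q' C r \<and> r \<noteq> Leaf) = H - 1"
      unfolding H_def by (rule tree_gf_non_Leaf) simp
    then show ?thesis
      by (subst tree_gf_disj, blast)+ (simp only: tree_gf_Leaf tree_gf_Node H_def)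
  qed
  finally have H_eq: "H = 1 + (fps_X * H * 1 + fps_X * tree_gf left_ok * (H - 1))" .
  have left_ok_eq: "tree_gf left_ok = 1 + fps_X * A * H"
    unfolding left_ok_def A_def H_def by (rule tree_gf_Leaf_or_Node)
  from H_eq left_ok_eq show ?thesis
    by algebra
qed

theorem lemma20:
  fixes P :: btree and e :: "bool list \<Rightarrow> bool"
  assumes "P \<noteq> Leaf"
  shows "wilf_equiv (Q_tree P) (Q_e e) (Q'_tree P) (Q'_e e)"
proof -
  define C where "C U \<longleftrightarrow> contains U P e" for U
  have C_Node: "C l \<or> C r \<Longrightarrow> C (Node l r)" for l r
    unfolding C_def by (rule contains_Node)
  have "tree_gf (\<lambda>T. \<not> occurs_Q C T) = tree_gf (\<lambda>T. \<not> occurs_Q' C T)"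
    using tree_gf_not_occurs_Q[of C, OF C_Node] tree_gf_not_occurs_Q'[of C, OF C_Node]
    by (rule fps_quadratic_root_unique) simp_all
  then have "card {T. nnodes T = n \<and> \<not> occurs_Q C T} =
      card {T. nnodes T = n \<and> \<not> occurs_Q' C T}" for n
    by (metis fps_nth_tree_gf of_nat_eq_iff)
  then show ?thesis
    unfolding wilf_equiv_def avoiders_def contains_Q_tree_iff contains_Q'_tree_iff C_def by simp
qed

end
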